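(* In any block graph $G$ there exists a vertex $w$ with $\Gamma(w)=\Gamma(G)$, and if $\Gamma(G)>\omega(G)$ then every vertex $w$ with $\Gamma(w)=\Gamma(G)$ is a cut-vertex of $G$.
   Context: A Grundy-coloring of a graph $G$ is a proper vertex coloring with nonempty color classes $C_1,\ldots,C_k$ (color $i$ on $C_i$) such that for all $i<j$ every vertex of $C_j$ has a neighbor in $C_i$. $\Gamma(G)$ is the maximum number of colors in a Grundy-coloring of $G$, and for a vertex $v$, $\Gamma(v)$ is the maximum color that $v$ receives in some Grundy-coloring of $G$. $\omega(G)$ is the size of a largest clique. A block of a graph is a maximal 2-connected subgraph or a bridge (as a $K_2$); a block graph is a graph all of whose blocks are complete graphs. A cut-vertex is a vertex whose removal increases the number of connected components. *)

theory Defs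
  imports Main
begin

definition graph :: "'a set \<Rightarrow> ('a \<Rightarrow> 'a \<Rightarrow> bool) \<Rightarrow> bool" where
  "graph V E \<longleftrightarrow> finite V \<and> (\<forall>x y. E x y \<longrightarrow> x \<in> V \<and> y \<in> V)
     \<and> (\<forall>x y. E x y \<longrightarrow> E y x) \<and> (\<forall>x. \<not> E x x)"

definition reach :: "'a set \<Rightarrow> ('a \<Rightarrow> 'a \<Rightarrow> bool) \<Rightarrow> 'a \<Rightarrow> 'a \<Rightarrow> bool" where
  "reach S E x y \<longleftrightarrow> x \<in> S \<and> (\<lambda>a b. a \<in> S \<and> b \<in> S \<and> E a b)\<^sup>*\<^sup>* x y"

definition components :: "'a set \<Rightarrow> ('a \<Rightarrow> 'a \<Rightarrow> bool) \<Rightarrow> 'a set set" where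
  "components S E = (\<lambda>x. {y \<in> S. reach S E x y}) ` S"

definition num_components :: "'a set \<Rightarrow> ('a \<Rightarrow> 'a \<Rightarrow> bool) \<Rightarrow> nat" where
  "num_components S E = card (components S E)"

definition connected_on :: "'a set \<Rightarrow> ('a \<Rightarrow> 'a \<Rightarrow> bool) \<Rightarrow> bool" where
  "connected_on S E \<longleftrightarrow> S \<noteq> {} \<and> (\<forall>x\<in>S. \<forall>y\<in>S. reach S E x y)"

definition cut_vertex :: "'a set \<Rightarrow> ('a \<Rightarrow> 'a \<Rightarrow> bool) \<Rightarrow> 'a \<Rightarrow> bool" where
  "cut_vertex S E v \<longleftrightarrow> v \<in> S \<and> num_components (S - {v}) E > num_components S E"

text \<open>Block: maximal connected (induced) subgraph without a cut-vertex.  For at least two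
  vertices these are exactly the maximal 2-connected subgraphs and the bridges.\<close>
definition is_block :: "'a set \<Rightarrow> ('a \<Rightarrow> 'a \<Rightarrow> bool) \<Rightarrow> 'a set \<Rightarrow> bool" where
  "is_block V E B \<longleftrightarrow> B \<subseteq> V \<and> connected_on B E \<and> \<not> (\<exists>v\<in>B. cut_vertex B E v)
     \<and> (\<forall>B'. B \<subset> B' \<and> B' \<subseteq> V \<and> connected_on B' E \<longrightarrow> (\<exists>v\<in>B'. cut_vertex B' E v))"

definition is_clique :: "('a \<Rightarrow> 'a \<Rightarrow> bool) \<Rightarrow> 'a set \<Rightarrow> bool" where
  "is_clique E K \<longleftrightarrow> (\<forall>x\<in>K. \<forall>y\<in>K. x \<noteq> y \<longrightarrow> E x y)"

definition block_graph :: "'a set \<Rightarrow> ('a \<Rightarrow> 'a \<Rightarrow> bool) \<Rightarrow> bool" where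
  "block_graph V E \<longleftrightarrow> (\<forall>B. is_block V E B \<longrightarrow> is_clique E B)"

definition clique_number :: "'a set \<Rightarrow> ('a \<Rightarrow> 'a \<Rightarrow> bool) \<Rightarrow> nat" where
  "clique_number V E = Max {card K | K. K \<subseteq> V \<and> is_clique E K}"

definition grundy_coloring :: "'a set \<Rightarrow> ('a \<Rightarrow> 'a \<Rightarrow> bool) \<Rightarrow> ('a \<Rightarrow> nat) \<Rightarrow> nat \<Rightarrow> bool" where
  "grundy_coloring V E c k \<longleftrightarrow> c ` V = {1..k}
     \<and> (\<forall>x\<in>V. \<forall>y\<in>V. E x y \<longrightarrow> c x \<noteq> c y)
     \<and> (\<forall>v\<in>V. \<forall>i. 1 \<le> i \<and> i < c v \<longrightarrow> (\<exists>u\<in>V. E v u \<and> c u = i))"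

definition grundy_number :: "'a set \<Rightarrow> ('a \<Rightarrow> 'a \<Rightarrow> bool) \<Rightarrow> nat" where
  "grundy_number V E = Max {k. \<exists>c. grundy_coloring V E c k}"

definition grundy_vertex :: "'a set \<Rightarrow> ('a \<Rightarrow> 'a \<Rightarrow> bool) \<Rightarrow> 'a \<Rightarrow> nat" where
  "grundy_vertex V E w = Max {c w | c. \<exists>k. grundy_coloring V E c k}"

end

theory Submission
  imports Defs "HOL-Library.Transitive_Closure_Table"
begin

text \<open>
  A proper coloring with positive colors of minimal color sum is a Grundy coloring, so
  Grundy colorings exist, and a vertex carrying the top color of an optimal one has
  \<open>\<Gamma>(w) = \<Gamma>(G)\<close>.  If \<open>w\<close> is not a cut-vertex, any two neighbours \<open>u\<close>, \<open>v\<close> of \<open>w\<close> are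
  joined by a simple path avoiding \<open>w\<close>; together with \<open>w\<close> it forms a cycle, which has no
  cut-vertex and therefore lies in a block, a clique in a block graph.  Hence the closed
  neighbourhood \<open>N[w]\<close> is a clique, and as a vertex of color \<open>i\<close> sees all colors below \<open>i\<close>,
  \<open>\<Gamma>(w) \<le> |N[w]| \<le> \<omega>(G)\<close>.
\<close>

lemma graph_symp: "graph V E \<Longrightarrow> symp E"
  by (simp add: graph_def symp_def)

lemma reach_refl: "x \<in> S \<Longrightarrow> reach S E x x"
  by (simp add: reach_def)

lemma reach_edge: "x \<in> S \<Longrightarrow> y \<in> S \<Longrightarrow> E x y \<Longrightarrow> reach S E x y"
  by (auto simp: reach_def)

lemma reach_trans: "reach S E x y \<Longrightarrow> reach S E y z \<Longrightarrow> reach S E x z"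
  unfolding reach_def by (auto intro: rtranclp_trans)

lemma reach_sym: "symp E \<Longrightarrow> reach S E x y \<Longrightarrow> reach S E y x"
  unfolding reach_def
  by (metis (mono_tags, lifting) rtranclp.cases symp_rtranclp sympD sympI)

lemma reach_mono: "S \<subseteq> T \<Longrightarrow> reach S E x y \<Longrightarrow> reach T E x y"
  unfolding reach_def by (auto elim: mono_rtranclp[rule_format, rotated])

definition component :: "'a set \<Rightarrow> ('a \<Rightarrow> 'a \<Rightarrow> bool) \<Rightarrow> 'a \<Rightarrow> 'a set" where
  "component S E x = {y \<in> S. reach S E x y}"

lemma components_eq_image_component: "components S E = component S E ` S"
  by (simp add: components_def component_def)

lemma component_eq_if_reach:
  "symp E \<Longrightarrow> reach S E x y \<Longrightarrow> component S E x = component S E y"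
  unfolding component_def by (blast intro: reach_trans reach_sym)

lemma num_components_eq_1:
  assumes "connected_on S E"
  shows "num_components S E = 1"
proof -
  have "components S E = {S}"
    using assms unfolding components_def connected_on_def by auto
  then show ?thesis
    by (simp add: num_components_def)
qed

lemma cut_vertex_if_separates_neighbours:
  assumes "graph V E" "E w u" "E w v" "\<not> reach (V - {w}) E u v"
  shows "cut_vertex V E w"
proof -
  define V' where "V' = V - {w}"
  have sym: "symp E"
    using assms(1) by (rule graph_symp)
  have "w \<in> V" "u \<in> V" "v \<in> V" "u \<noteq> w" "v \<noteq> w"
    using assms(1-3) by (auto simp: graph_def)
  then have in_V': "u \<in> V'" "v \<in> V'"
    by (auto simp: V'_def)
  have comp_w: "component V E w = component V E x" if "x \<in> {u, v}" for x
    using that assms(2,3) \<open>w \<in> V\<close> \<open>u \<in> V\<close> \<open>v \<in> V\<close>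
    by (auto intro!: component_eq_if_reach[OF sym] reach_edge)
  \<comment> \<open>\<open>lift\<close> maps the components of \<open>V'\<close> onto those of \<open>V\<close> but merges those of \<open>u\<close> and \<open>v\<close>\<close>
  define lift where "lift C = {y \<in> V. \<exists>x\<in>C. reach V E x y}" for C
  have lift_component: "lift (component V' E x) = component V E x" if "x \<in> V'" for x
  proof -
    have "reach V E x x'" if "x' \<in> component V' E x" for x'
      using that reach_mono[of V' V] by (auto simp: component_def V'_def)
    then show ?thesis
      using that reach_refl[of x V' E] unfolding lift_def component_def
      by (auto intro: reach_trans)
  qed
  have "lift ` components V' E = component V E ` V'"
    by (simp add: components_eq_image_component image_image lift_component cong: image_cong)
  also have "\<dots> = components V E"
    using comp_w in_V' \<open>w \<in> V\<close> by (auto simp: components_eq_image_component V'_def)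
  finally have lift_image: "lift ` components V' E = components V E" .
  have "component V' E u \<noteq> component V' E v"
    using assms(4) in_V' reach_refl[of v V' E] by (auto simp: component_def V'_def)
  moreover have "lift (component V' E u) = lift (component V' E v)"
    using lift_component in_V' comp_w[of u] comp_w[of v] by simp
  ultimately have "\<not> inj_on lift (components V' E)"
    using in_V' unfolding inj_on_def components_eq_image_component by blast
  moreover have "finite (components V' E)"
    using assms(1) by (simp add: components_eq_image_component graph_def V'_def)
  ultimately have "card (components V E) < card (components V' E)"
    using lift_image card_image_le inj_on_iff_eq_card le_neq_implies_less by metis
  then show ?thesis
    using \<open>w \<in> V\<close> by (simp add: cut_vertex_def num_components_def V'_def)
qed

lemma rtrancl_path_restrict_imp_successively:
  assumes "rtrancl_path (\<lambda>a b. a \<in> S \<and> b \<in> S \<and> E a b) x xs y" "x \<in> S"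
  shows "successively E (x # xs) \<and> last (x # xs) = y \<and> set xs \<subseteq> S"
  using assms by (induction rule: rtrancl_path.induct) auto

lemma reach_obtains_simple_path:
  assumes "reach S E x y"
  obtains p where "p \<noteq> []" "hd p = x" "last p = y" "distinct p" "successively E p" "set p \<subseteq> S"
proof -
  let ?R = "\<lambda>a b. a \<in> S \<and> b \<in> S \<and> E a b"
  have "x \<in> S" and "?R\<^sup>*\<^sup>* x y"
    using assms by (simp_all add: reach_def)
  then obtain xs0 where "rtrancl_path ?R x xs0 y"
    by (auto simp: rtranclp_eq_rtrancl_path)
  then obtain xs where xs: "rtrancl_path ?R x xs y" "distinct (x # xs)"
    by (rule rtrancl_path_distinct)
  show thesis
    using rtrancl_path_restrict_imp_successively[OF xs(1) \<open>x \<in> S\<close>] xs(2) \<open>x \<in> S\<close>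
    by (intro that[of "x # xs"]) auto
qed

lemma reach_hd_if_successively:
  "successively E p \<Longrightarrow> set p \<subseteq> S \<Longrightarrow> y \<in> set p \<Longrightarrow> reach S E (hd p) y"
proof (induction p)
  case (Cons x p)
  show ?case
  proof (cases "y = x")
    case False
    with Cons.prems have "p \<noteq> []" "reach S E (hd p) y"
      by (auto intro: Cons.IH simp: successively_Cons)
    moreover have "reach S E x (hd p)"
      using Cons.prems \<open>p \<noteq> []\<close> by (intro reach_edge) (auto simp: successively_Cons)
    ultimately show ?thesis by (auto intro: reach_trans)
  qed (use Cons.prems in \<open>auto intro: reach_refl\<close>)
qed simp

lemma connected_on_path:
  assumes "symp E" "successively E p" "p \<noteq> []"
  shows "connected_on (set p) E"
proof -
  have "reach (set p) E x y" if "x \<in> set p" "y \<in> set p" for x y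
  proof -
    have "reach (set p) E (hd p) x" "reach (set p) E (hd p) y"
      using reach_hd_if_successively[OF assms(2) order_refl] that by blast+
    then show ?thesis
      by (blast intro: reach_trans reach_sym[OF assms(1)])
  qed
  with assms(3) show ?thesis
    by (simp add: connected_on_def)
qed

lemma cycle_no_cut_vertex:
  assumes "symp E" "distinct q" "successively E q" "E (last q) (hd q)"
  shows "\<not> cut_vertex (set q) E x"
proof
  assume "cut_vertex (set q) E x"
  then obtain as bs where q: "q = as @ x # bs"
    by (meson cut_vertex_def split_list)
  \<comment> \<open>deleting \<open>x\<close> from the cycle leaves the path \<open>bs @ as\<close>, which wraps around the closing edge\<close>
  have rest: "set (bs @ as) = set q - {x}"
    using assms(2) by (auto simp: q)
  have path: "successively E (bs @ as)"
    using assms(3,4) unfolding q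
    by (cases "as = []"; cases "bs = []") (simp_all add: successively_append_iff successively_Cons)
  have "num_components (set q - {x}) E \<le> 1"
  proof (cases "bs @ as = []")
    case True
    then have "set q - {x} = {}"
      using rest by simp
    then have "components (set q - {x}) E = {}"
      by (simp add: components_def)
    then show ?thesis
      by (simp add: num_components_def)
  next
    case False
    then show ?thesis
      using connected_on_path[OF assms(1) path False] rest by (simp add: num_components_eq_1)
  qed
  moreover have "num_components (set q) E = 1"
    using connected_on_path[OF assms(1,3)] num_components_eq_1 q by blast
  ultimately show False
    using \<open>cut_vertex (set q) E x\<close> by (simp add: cut_vertex_def)
qed

lemma block_containing:
  assumes "finite V" "S \<subseteq> V" "connected_on S E" "\<forall>x\<in>S. \<not> cut_vertex S E x"
  obtains B where "is_block V E B" "S \<subseteq> B"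
proof -
  define A where
    "A = {B. S \<subseteq> B \<and> B \<subseteq> V \<and> connected_on B E \<and> (\<forall>x\<in>B. \<not> cut_vertex B E x)}"
  have "finite A"
    using assms(1) by (intro finite_subset[of A "Pow V"]) (auto simp: A_def)
  moreover have "S \<in> A"
    using assms by (simp add: A_def)
  ultimately obtain B where B: "B \<in> A" and maximal: "\<forall>B'\<in>A. B \<subseteq> B' \<longrightarrow> B = B'"
    using finite_has_maximal by blast
  have "is_block V E B"
    unfolding is_block_def
  proof (intro conjI allI impI)
    show "B \<subseteq> V" "connected_on B E" "\<not> (\<exists>x\<in>B. cut_vertex B E x)"
      using B by (auto simp: A_def)
  next
    fix B' assume B': "B \<subset> B' \<and> B' \<subseteq> V \<and> connected_on B' E"
    then have "B' \<notin> A"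
      using maximal by blast
    with B B' show "\<exists>x\<in>B'. cut_vertex B' E x"
      by (auto simp: A_def)
  qed
  then show thesis
    using B that by (simp add: A_def)
qed

lemma block_graph_clique:
  assumes "block_graph V E" "finite V" "S \<subseteq> V" "connected_on S E"
    "\<forall>x\<in>S. \<not> cut_vertex S E x"
  shows "is_clique E S"
proof -
  obtain B where "is_block V E B" "S \<subseteq> B"
    using block_containing[OF assms(2-5)] .
  with assms(1) show ?thesis
    unfolding block_graph_def is_clique_def by blast
qed

lemma block_graph_neighbours_adjacent:
  assumes "graph V E" "block_graph V E" "\<not> cut_vertex V E w" "E w u" "E w v" "u \<noteq> v"
  shows "E u v"
proof -
  have sym: "symp E"
    using assms(1) by (rule graph_symp)
  obtain p where p: "p \<noteq> []" "hd p = u" "last p = v" "distinct p" "successively E p"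
    "set p \<subseteq> V - {w}"
    using cut_vertex_if_separates_neighbours assms(1,3-5) reach_obtains_simple_path by metis
  have "successively E (w # p)" "E (last (w # p)) (hd (w # p))" "distinct (w # p)"
    using p assms(4,5) sympD[OF sym] by (auto simp: successively_Cons)
  then have "is_clique E (set (w # p))"
    using assms(1) p(1,6)
    by (intro block_graph_clique[OF assms(2)] connected_on_path[OF sym] ballI cycle_no_cut_vertex[OF sym])
      (auto simp: graph_def)
  then show ?thesis
    using p(1-3) assms(6) unfolding is_clique_def by auto
qed

definition proper_coloring :: "'a set \<Rightarrow> ('a \<Rightarrow> 'a \<Rightarrow> bool) \<Rightarrow> ('a \<Rightarrow> nat) \<Rightarrow> bool" where
  "proper_coloring V E c \<longleftrightarrow> (\<forall>x\<in>V. 1 \<le> c x) \<and> (\<forall>x\<in>V. \<forall>y\<in>V. E x y \<longrightarrow> c x \<noteq> c y)"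

lemma proper_coloring_exists:
  assumes "graph V E"
  obtains c where "proper_coloring V E c"
proof -
  obtain f :: "'a \<Rightarrow> nat" where "inj_on f V"
    using assms finite_imp_inj_to_nat_seg by (metis graph_def)
  then have "proper_coloring V E (\<lambda>x. f x + 1)"
    using assms by (auto simp: proper_coloring_def graph_def inj_on_def) blast
  then show thesis ..
qed

lemma min_sum_proper_coloring_has_smaller_colors:
  assumes "graph V E" "proper_coloring V E c"
    and min: "\<And>d. proper_coloring V E d \<Longrightarrow> sum c V \<le> sum d V"
    and "v \<in> V" "1 \<le> i" "i < c v"
  shows "\<exists>u\<in>V. E v u \<and> c u = i"
proof (rule ccontr)
  assume "\<not> (\<exists>u\<in>V. E v u \<and> c u = i)"
  \<comment> \<open>then \<open>v\<close> could be recolored with \<open>i\<close>, decreasing the color sum\<close>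
  then have "proper_coloring V E (c(v := i))"
    using assms(1,2,5) by (auto simp: proper_coloring_def graph_def)
  then have "sum c V \<le> sum (c(v := i)) V"
    by (rule min)
  moreover have "sum (c(v := i)) V < sum c V"
    using assms(1,4,6) by (intro sum_strict_mono_ex1) (auto simp: graph_def)
  ultimately show False
    by simp
qed

lemma grundy_coloringI:
  assumes "finite V" "V \<noteq> {}" "proper_coloring V E c"
    and smaller: "\<And>v i. v \<in> V \<Longrightarrow> 1 \<le> i \<Longrightarrow> i < c v \<Longrightarrow> \<exists>u\<in>V. E v u \<and> c u = i"
  shows "grundy_coloring V E c (Max (c ` V))"
proof -
  have "c ` V = {1..Max (c ` V)}"
  proof
    show "c ` V \<subseteq> {1..Max (c ` V)}"
      using assms(1,3) by (auto simp: proper_coloring_def)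
    show "{1..Max (c ` V)} \<subseteq> c ` V"
    proof
      fix i assume i: "i \<in> {1..Max (c ` V)}"
      have "Max (c ` V) \<in> c ` V"
        using assms(1,2) by simp
      then obtain v where v: "v \<in> V" "c v = Max (c ` V)"
        by auto
      show "i \<in> c ` V"
      proof (cases "i = c v")
        case False
        then show ?thesis
          using i v smaller[OF v(1), of i] by auto
      qed (use v(1) in blast)
    qed
  qed
  with assms(3,4) show ?thesis
    by (auto simp: grundy_coloring_def proper_coloring_def)
qed

lemma grundy_coloring_exists:
  assumes "graph V E" "V \<noteq> {}"
  obtains c k where "grundy_coloring V E c k"
proof -
  obtain c0 where "proper_coloring V E c0"
    using proper_coloring_exists[OF assms(1)] .
  then obtain c where c: "proper_coloring V E c"
    and min: "\<And>d. proper_coloring V E d \<Longrightarrow> sum c V \<le> sum d V"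
    using ex_has_least_nat[of "proper_coloring V E" c0 "\<lambda>c. sum c V"] by blast
  have "finite V"
    using assms(1) by (simp add: graph_def)
  with assms(2) c show thesis
    by (blast intro: that grundy_coloringI min_sum_proper_coloring_has_smaller_colors[OF assms(1) c min])
qed

lemma grundy_coloring_colors: "grundy_coloring V E c k \<Longrightarrow> x \<in> V \<Longrightarrow> c x \<in> {1..k}"
  unfolding grundy_coloring_def by blast

lemma grundy_coloring_le_card: "finite V \<Longrightarrow> grundy_coloring V E c k \<Longrightarrow> k \<le> card V"
  unfolding grundy_coloring_def by (metis card_atLeastAtMost card_image_le diff_Suc_1)

lemma finite_grundy_colorings: "finite V \<Longrightarrow> finite {k. \<exists>c. grundy_coloring V E c k}"
  by (rule finite_subset[of _ "{..card V}"]) (auto dest: grundy_coloring_le_card)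

lemma le_grundy_number: "finite V \<Longrightarrow> grundy_coloring V E c k \<Longrightarrow> k \<le> grundy_number V E"
  unfolding grundy_number_def by (blast intro: Max_ge finite_grundy_colorings)

lemma grundy_number_attained:
  assumes "graph V E" "V \<noteq> {}"
  obtains c where "grundy_coloring V E c (grundy_number V E)"
proof -
  have "{k. \<exists>c. grundy_coloring V E c k} \<noteq> {}"
    using grundy_coloring_exists[OF assms] by blast
  then have "grundy_number V E \<in> {k. \<exists>c. grundy_coloring V E c k}"
    unfolding grundy_number_def using assms(1)
    by (intro Max_in finite_grundy_colorings) (simp_all add: graph_def)
  then show thesis
    using that by blast
qed

lemma finite_grundy_vertex_colors:
  assumes "finite V" "w \<in> V"
  shows "finite {c w | c. \<exists>k. grundy_coloring V E c k}"
proof (rule finite_subset[of _ "{..grundy_number V E}"])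
  show "{c w | c. \<exists>k. grundy_coloring V E c k} \<subseteq> {..grundy_number V E}"
  proof clarify
    fix c k assume "grundy_coloring V E c k"
    then have "c w \<le> k" "k \<le> grundy_number V E"
      using grundy_coloring_colors[OF _ assms(2)] le_grundy_number[OF assms(1)] by auto
    then show "c w \<le> grundy_number V E"
      by simp
  qed
qed simp

lemma le_grundy_vertex:
  assumes "finite V" "w \<in> V" "grundy_coloring V E c k"
  shows "c w \<le> grundy_vertex V E w"
proof -
  have "c w \<in> {c w | c. \<exists>k. grundy_coloring V E c k}"
    using assms(3) by blast
  then show ?thesis
    unfolding grundy_vertex_def by (rule Max_ge[OF finite_grundy_vertex_colors[OF assms(1,2)]])
qed

lemma grundy_vertex_attained:
  assumes "graph V E" "V \<noteq> {}" "w \<in> V"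
  obtains c k where "grundy_coloring V E c k" "c w = grundy_vertex V E w"
proof -
  let ?colors = "{c w | c. \<exists>k. grundy_coloring V E c k}"
  obtain c k where "grundy_coloring V E c k"
    using grundy_coloring_exists[OF assms(1,2)] .
  then have "?colors \<noteq> {}"
    by blast
  moreover have "finite ?colors"
    using assms(1,3) by (simp add: finite_grundy_vertex_colors graph_def)
  ultimately have "grundy_vertex V E w \<in> ?colors"
    unfolding grundy_vertex_def by (rule Max_in[rotated])
  then show thesis
    using that by auto
qed

lemma grundy_vertex_le_grundy_number:
  assumes "graph V E" "V \<noteq> {}" "w \<in> V"
  shows "grundy_vertex V E w \<le> grundy_number V E"
proof -
  obtain c k where c: "grundy_coloring V E c k" "c w = grundy_vertex V E w"
    using grundy_vertex_attained[OF assms] .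
  then have "grundy_vertex V E w \<le> k"
    using grundy_coloring_colors[OF c(1) assms(3)] by simp
  also have "k \<le> grundy_number V E"
    using assms(1) le_grundy_number[OF _ c(1)] by (simp add: graph_def)
  finally show ?thesis .
qed

lemma exists_grundy_vertex_eq_grundy_number:
  assumes "graph V E" "V \<noteq> {}"
  shows "\<exists>w\<in>V. grundy_vertex V E w = grundy_number V E"
proof -
  obtain c where c: "grundy_coloring V E c (grundy_number V E)"
    using grundy_number_attained[OF assms] .
  then have "c ` V = {1..grundy_number V E}"
    by (simp add: grundy_coloring_def)
  with assms(2) have "grundy_number V E \<in> c ` V"
    by auto
  then obtain w where w: "w \<in> V" "c w = grundy_number V E"
    by auto
  have "grundy_number V E \<le> grundy_vertex V E w"
    using assms(1) le_grundy_vertex[OF _ w(1) c] w(2) by (simp add: graph_def)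
  with grundy_vertex_le_grundy_number[OF assms w(1)] w(1) show ?thesis
    by (auto intro: antisym)
qed

definition closed_neighbourhood :: "'a set \<Rightarrow> ('a \<Rightarrow> 'a \<Rightarrow> bool) \<Rightarrow> 'a \<Rightarrow> 'a set" where
  "closed_neighbourhood V E w = insert w {u \<in> V. E w u}"

lemma grundy_color_le_card_closed_neighbourhood:
  assumes "finite V" "w \<in> V" "grundy_coloring V E c k"
  shows "c w \<le> card (closed_neighbourhood V E w)"
proof -
  let ?N = "closed_neighbourhood V E w"
  have "finite ?N"
    using assms(1) by (simp add: closed_neighbourhood_def)
  have "{1..c w} \<subseteq> c ` ?N"
  proof
    fix i assume i: "i \<in> {1..c w}"
    show "i \<in> c ` ?N"
    proof (cases "i = c w")
      case False
      with i have "1 \<le> i" "i < c w"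
        by auto
      with assms(2,3) obtain u where "u \<in> V" "E w u" "c u = i"
        unfolding grundy_coloring_def by blast
      then show ?thesis
        by (auto simp: closed_neighbourhood_def)
    qed (simp add: closed_neighbourhood_def)
  qed
  then have "card {1..c w} \<le> card (c ` ?N)"
    by (rule card_mono[OF finite_imageI[OF \<open>finite ?N\<close>]])
  then have "c w \<le> card (c ` ?N)"
    by simp
  also have "\<dots> \<le> card ?N"
    using card_image_le[OF \<open>finite ?N\<close>] .
  finally show ?thesis .
qed

lemma card_clique_le_clique_number:
  assumes "finite V" "K \<subseteq> V" "is_clique E K"
  shows "card K \<le> clique_number V E"
proof -
  have "{card K | K. K \<subseteq> V \<and> is_clique E K} \<subseteq> card ` Pow V"
    by blast
  then have "finite {card K | K. K \<subseteq> V \<and> is_clique E K}"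
    using assms(1) by (simp add: finite_subset)
  moreover have "card K \<in> {card K | K. K \<subseteq> V \<and> is_clique E K}"
    using assms(2,3) by blast
  ultimately show ?thesis
    unfolding clique_number_def by (rule Max_ge)
qed

lemma block_graph_closed_neighbourhood_clique:
  assumes "graph V E" "block_graph V E" "\<not> cut_vertex V E w"
  shows "is_clique E (closed_neighbourhood V E w)"
  unfolding is_clique_def
proof (intro ballI impI)
  fix x y assume xy: "x \<in> closed_neighbourhood V E w" "y \<in> closed_neighbourhood V E w" "x \<noteq> y"
  consider "x = w" "E w y" | "y = w" "E w x" | "E w x" "E w y"
    using xy by (auto simp: closed_neighbourhood_def)
  then show "E x y"
    using block_graph_neighbours_adjacent[OF assms _ _ xy(3)] graph_symp[OF assms(1)]
    by cases (auto dest: sympD)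
qed

lemma grundy_vertex_le_clique_number_if_not_cut_vertex:
  assumes "graph V E" "block_graph V E" "V \<noteq> {}" "w \<in> V" "\<not> cut_vertex V E w"
  shows "grundy_vertex V E w \<le> clique_number V E"
proof -
  have "finite V"
    using assms(1) by (simp add: graph_def)
  obtain c k where c: "grundy_coloring V E c k" "c w = grundy_vertex V E w"
    using grundy_vertex_attained[OF assms(1,3,4)] .
  have "grundy_vertex V E w \<le> card (closed_neighbourhood V E w)"
    using grundy_color_le_card_closed_neighbourhood[OF \<open>finite V\<close> assms(4) c(1)] c(2) by simp
  also have "\<dots> \<le> clique_number V E"
    using card_clique_le_clique_number[OF \<open>finite V\<close> _
        block_graph_closed_neighbourhood_clique[OF assms(1,2,5)]] assms(4)
    by (auto simp: closed_neighbourhood_def)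
  finally show ?thesis .
qed

theorem proposition3:
  fixes V :: "'a set" and E :: "'a \<Rightarrow> 'a \<Rightarrow> bool"
  assumes "graph V E" and "V \<noteq> {}" and "block_graph V E"
  shows "(\<exists>w\<in>V. grundy_vertex V E w = grundy_number V E)
       \<and> (grundy_number V E > clique_number V E \<longrightarrow>
            (\<forall>w\<in>V. grundy_vertex V E w = grundy_number V E \<longrightarrow> cut_vertex V E w))"
proof -
  have "cut_vertex V E w"
    if "clique_number V E < grundy_number V E" "w \<in> V"
      "grundy_vertex V E w = grundy_number V E" for w
  proof (rule ccontr)
    assume "\<not> cut_vertex V E w"
    then have "grundy_vertex V E w \<le> clique_number V E"
      by (rule grundy_vertex_le_clique_number_if_not_cut_vertex[OF assms(1,3,2) that(2)])
    with that(1,3) show False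
      by simp
  qed
  with exists_grundy_vertex_eq_grundy_number[OF assms(1,2)] show ?thesis
    by blast
qed

end
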